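(* Let $M$ be a matroid on a finite set $E$ with $r(M)>0$. Then $F(M)$ is a partition of $\cup\mathcal{B}(M)$ if and only if $M$ is a unique expansion matroid.
   Context: A matroid $M=(E,\mathcal{I})$ has independent sets $\mathcal{I}(M)$; $\mathcal{B}(M)$ denotes its family of bases (maximal independent sets), $r(M)$ the common cardinality of its bases, and $r(X)$ the rank of $X\subseteq E$ (maximum size of an independent subset of $X$). For a set family $S$, $\cup S=\bigcup_{X\in S}X$. A partition of a set $U$ is a family of nonempty, pairwise disjoint subsets of $U$ whose union is $U$. For $r(M)>0$: the secondary base family is $s(M)=\{A\in\mathcal{I}(M): |A|=r(M)-1\}$; for $X\subseteq E$, $K_M(X)=\{a\in E: r(X\cup\{a\})=r(X)+1\}$; the forming base family is $F(M)=\{K_M(X): X\in s(M)\}$. $M$ is a unique expansion matroid if for every $B\in\mathcal{B}(M)$ and every $A\in s(M)$, whenever $e_1,e_2\in B$ satisfy $A\cup\{e_1\}\in\mathcal{B}(M)$ and $A\cup\{e_2\}\in\mathcal{B}(M)$, then $e_1=e_2$. *)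

theory Defs
  imports Main "HOL-Library.Disjoint_Sets"
begin

definition matroid :: "'a set \<Rightarrow> ('a set \<Rightarrow> bool) \<Rightarrow> bool" where
  "matroid E indep \<longleftrightarrow>
     (\<forall>X. indep X \<longrightarrow> X \<subseteq> E) \<and>
     indep {} \<and>
     (\<forall>X Y. indep X \<and> Y \<subseteq> X \<longrightarrow> indep Y) \<and>
     (\<forall>X Y. indep X \<and> indep Y \<and> card X < card Y \<longrightarrow> (\<exists>e\<in>Y - X. indep (insert e X)))"

definition bases :: "('a set \<Rightarrow> bool) \<Rightarrow> 'a set set" where
  "bases indep = {B. indep B \<and> (\<forall>C. indep C \<and> B \<subseteq> C \<longrightarrow> C = B)}"

definition mrank :: "('a set \<Rightarrow> bool) \<Rightarrow> 'a set \<Rightarrow> nat" where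
  "mrank indep X = Max {card Y | Y. Y \<subseteq> X \<and> indep Y}"

definition matroid_rank :: "'a set \<Rightarrow> ('a set \<Rightarrow> bool) \<Rightarrow> nat" where
  "matroid_rank E indep = mrank indep E"

definition secondary_bases :: "'a set \<Rightarrow> ('a set \<Rightarrow> bool) \<Rightarrow> 'a set set" where
  "secondary_bases E indep = {A. indep A \<and> card A = matroid_rank E indep - 1}"

definition Kset :: "'a set \<Rightarrow> ('a set \<Rightarrow> bool) \<Rightarrow> 'a set \<Rightarrow> 'a set" where
  "Kset E indep X = {a \<in> E. mrank indep (X \<union> {a}) = mrank indep X + 1}"

definition forming_bases :: "'a set \<Rightarrow> ('a set \<Rightarrow> bool) \<Rightarrow> 'a set set" where
  "forming_bases E indep = Kset E indep ` secondary_bases E indep"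

definition unique_expansion :: "'a set \<Rightarrow> ('a set \<Rightarrow> bool) \<Rightarrow> bool" where
  "unique_expansion E indep \<longleftrightarrow>
     (\<forall>B \<in> bases indep. \<forall>A \<in> secondary_bases E indep. \<forall>e1 e2.
        e1 \<in> B \<and> e2 \<in> B \<and> A \<union> {e1} \<in> bases indep \<and> A \<union> {e2} \<in> bases indep
        \<longrightarrow> e1 = e2)"

end

theory Submission
  imports Defs
begin

text \<open>For a secondary base X, K(X) is the set of elements completing X to a base. Every
  element a of a base B lies in K(B - {a}) and every secondary base extends to a base, so the
  sets K(X) cover the union of the bases and are nonempty; the only question is disjointness. If two different sets K(X) and K(Y) share an
  element e, then some f lies in K(X) but not in K(Y); completing {f} to a base inside
  Y + e + f forces a base containing both e and f, which together with the bases X + e and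
  X + f violates unique expansion. Conversely, if e1 \<noteq> e2 both lie in a base B and
  complete A, then K(A) and K(B - {e1}) share e1 but differ at e2.\<close>

lemma unique_expansionD:
  assumes "unique_expansion E indep" "B \<in> bases indep" "A \<in> secondary_bases E indep"
    "e1 \<in> B" "e2 \<in> B" "insert e1 A \<in> bases indep" "insert e2 A \<in> bases indep"
  shows "e1 = e2"
  using assms unfolding unique_expansion_def by (metis Un_insert_right sup_bot.right_neutral)

locale finite_matroid =
  fixes E :: "'a set" and indep :: "'a set \<Rightarrow> bool"
  assumes finite_ground: "finite E" and matroid: "matroid E indep"
begin

lemma indep_subset_ground: "indep X \<Longrightarrow> X \<subseteq> E"
  using matroid unfolding matroid_def by blast

lemma indep_subset: "indep X \<Longrightarrow> Y \<subseteq> X \<Longrightarrow> indep Y"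
  using matroid unfolding matroid_def by blast

lemma indep_augment: "indep X \<Longrightarrow> indep Y \<Longrightarrow> card X < card Y \<Longrightarrow> \<exists>e\<in>Y - X. indep (insert e X)"
  using matroid unfolding matroid_def by blast

lemma finite_indep: "indep X \<Longrightarrow> finite X"
  using indep_subset_ground finite_ground finite_subset by blast

lemma finite_card_indep_subsets: "finite Z \<Longrightarrow> finite {card Y |Y. Y \<subseteq> Z \<and> indep Y}"
  by (rule finite_subset[of _ "card ` Pow Z"]) auto

lemma card_le_mrank: "finite Z \<Longrightarrow> Y \<subseteq> Z \<Longrightarrow> indep Y \<Longrightarrow> card Y \<le> mrank indep Z"
  unfolding mrank_def by (rule Max_ge) (auto simp: finite_card_indep_subsets)

lemma mrank_attained: "finite Z \<Longrightarrow> \<exists>Y\<subseteq>Z. indep Y \<and> card Y = mrank indep Z"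
proof -
  assume "finite Z"
  moreover have "indep {}"
    using matroid unfolding matroid_def by blast
  ultimately have "mrank indep Z \<in> {card Y |Y. Y \<subseteq> Z \<and> indep Y}"
    unfolding mrank_def by (intro Max_in finite_card_indep_subsets) auto
  then show ?thesis by auto
qed

lemma mrank_indep: "indep X \<Longrightarrow> mrank indep X = card X"
  using mrank_attained[OF finite_indep] card_le_mrank[OF finite_indep]
  by (metis card_mono finite_indep le_antisym order_refl)

lemma card_indep_le_rank: "indep X \<Longrightarrow> card X \<le> matroid_rank E indep"
  unfolding matroid_rank_def using card_le_mrank finite_ground indep_subset_ground by blast

lemma exists_indep_card_rank: "\<exists>T. indep T \<and> card T = matroid_rank E indep"
  unfolding matroid_rank_def using mrank_attained[OF finite_ground] by blast

lemma indep_augment_to_card: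
  assumes "indep J" "indep T" "card J \<le> card T"
  shows "\<exists>B. indep B \<and> card B = card T \<and> J \<subseteq> B \<and> B \<subseteq> J \<union> T"
  using assms
proof (induction "card T - card J" arbitrary: J)
  case 0
  then show ?case by auto
next
  case (Suc n)
  then obtain x where x: "x \<in> T - J" "indep (insert x J)"
    using indep_augment by (metis zero_less_Suc zero_less_diff)
  moreover have "card (insert x J) = Suc (card J)"
    using x finite_indep[OF Suc.prems(1)] by auto
  ultimately obtain B where "indep B" "card B = card T" "insert x J \<subseteq> B" "B \<subseteq> insert x J \<union> T"
    using Suc.hyps(1)[of "insert x J"] Suc.hyps(2) Suc.prems(2) by fastforce
  then show ?case using x by blast
qed

lemma bases_iff_card_rank: "B \<in> bases indep \<longleftrightarrow> indep B \<and> card B = matroid_rank E indep"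
proof
  assume B: "B \<in> bases indep"
  then have "indep B" unfolding bases_def by blast
  obtain T where T: "indep T" "card T = matroid_rank E indep"
    using exists_indep_card_rank by blast
  then obtain C where "indep C" "card C = matroid_rank E indep" "B \<subseteq> C"
    using indep_augment_to_card[OF \<open>indep B\<close> T(1)] card_indep_le_rank[OF \<open>indep B\<close>] by auto
  moreover have "C = B"
    using B \<open>indep C\<close> \<open>B \<subseteq> C\<close> unfolding bases_def by blast
  ultimately show "indep B \<and> card B = matroid_rank E indep" by simp
next
  assume B: "indep B \<and> card B = matroid_rank E indep"
  have "C = B" if "indep C" "B \<subseteq> C" for C
    using card_seteq[OF finite_indep that(2)] card_indep_le_rank that B by auto
  then show "B \<in> bases indep" unfolding bases_def using B by blast
qed

lemma base_delete_secondary: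
  assumes "B \<in> bases indep" "a \<in> B"
  shows "B - {a} \<in> secondary_bases E indep"
  using assms finite_indep indep_subset[of B "B - {a}"]
  by (auto simp: bases_iff_card_rank secondary_bases_def)

context
  assumes rank_pos: "matroid_rank E indep > 0"
begin

lemma Kset_secondary:
  assumes "X \<in> secondary_bases E indep"
  shows "Kset E indep X = {a. insert a X \<in> bases indep}"
proof -
  have X: "indep X" "card X = matroid_rank E indep - 1" "finite X"
    using assms finite_indep by (auto simp: secondary_bases_def)
  have "a \<in> Kset E indep X \<longleftrightarrow> insert a X \<in> bases indep" for a
  proof
    assume "a \<in> Kset E indep X"
    then have a: "a \<in> E" "mrank indep (insert a X) = card X + 1"
      unfolding Kset_def using mrank_indep[OF X(1)] by auto
    then obtain Y where Y: "Y \<subseteq> insert a X" "indep Y" "card Y = card X + 1"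
      using mrank_attained[of "insert a X"] X(3) by auto
    have "card (insert a X) \<le> card Y"
      using X(3) Y(3) by (simp add: card_insert_if)
    then have "Y = insert a X"
      using card_seteq[OF _ Y(1)] X(3) by blast
    then show "insert a X \<in> bases indep"
      using Y X rank_pos by (simp add: bases_iff_card_rank)
  next
    assume "insert a X \<in> bases indep"
    then have "indep (insert a X)" "card (insert a X) = card X + 1"
      using X rank_pos by (auto simp: bases_iff_card_rank)
    then show "a \<in> Kset E indep X"
      unfolding Kset_def using mrank_indep X(1) indep_subset_ground by auto
  qed
  then show ?thesis by blast
qed

lemma mem_Kset_base_delete: "B \<in> bases indep \<Longrightarrow> a \<in> B \<Longrightarrow> a \<in> Kset E indep (B - {a})"
  using Kset_secondary[OF base_delete_secondary] by (simp add: insert_absorb)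

lemma Union_forming_bases: "\<Union>(forming_bases E indep) = \<Union>(bases indep)"
proof
  show "\<Union>(forming_bases E indep) \<subseteq> \<Union>(bases indep)"
    unfolding forming_bases_def using Kset_secondary by blast
  show "\<Union>(bases indep) \<subseteq> \<Union>(forming_bases E indep)"
    unfolding forming_bases_def using mem_Kset_base_delete base_delete_secondary by blast
qed

lemma empty_notin_forming_bases: "{} \<notin> forming_bases E indep"
proof
  assume "{} \<in> forming_bases E indep"
  then obtain X where X: "X \<in> secondary_bases E indep" "Kset E indep X = {}"
    unfolding forming_bases_def by auto
  then have iX: "indep X" "card X = matroid_rank E indep - 1"
    by (auto simp: secondary_bases_def)
  obtain T where "indep T" "card T = matroid_rank E indep"
    using exists_indep_card_rank by blast
  then obtain B where B: "indep B" "card B = matroid_rank E indep" "X \<subseteq> B"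
    using indep_augment_to_card[OF iX(1)] iX(2) by fastforce
  moreover have "X \<noteq> B"
    using iX(2) B(2) rank_pos by auto
  ultimately obtain a where a: "a \<in> B" "a \<notin> X"
    by blast
  have "insert a X \<in> bases indep"
    using indep_subset[OF B(1), of "insert a X"] a B(3) iX rank_pos finite_indep[OF iX(1)]
    by (auto simp: bases_iff_card_rank)
  then show False using X Kset_secondary by blast
qed

lemma Kset_subset_if_common_element:
  assumes unique: "unique_expansion E indep"
    and X: "X \<in> secondary_bases E indep" and Y: "Y \<in> secondary_bases E indep"
    and e: "e \<in> Kset E indep X" "e \<in> Kset E indep Y"
  shows "Kset E indep X \<subseteq> Kset E indep Y"
proof
  fix f assume f: "f \<in> Kset E indep X"
  show "f \<in> Kset E indep Y"
  proof (rule ccontr)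
    assume nf: "f \<notin> Kset E indep Y"
    have eX: "insert e X \<in> bases indep" and fX: "insert f X \<in> bases indep"
      and eY: "insert e Y \<in> bases indep" and fY: "insert f Y \<notin> bases indep"
      using e f nf Kset_secondary[OF X] Kset_secondary[OF Y] by auto
    have iY: "card Y = matroid_rank E indep - 1" "finite Y"
      using Y finite_indep by (auto simp: secondary_bases_def)
    have "card {f} \<le> card (insert e Y)"
      using eY rank_pos by (simp add: bases_iff_card_rank)
    moreover have "indep {f}"
      using fX indep_subset by (auto simp: bases_iff_card_rank)
    ultimately obtain B where "indep B" "card B = card (insert e Y)" "{f} \<subseteq> B"
      and sub: "B \<subseteq> {f} \<union> insert e Y"
      using eY indep_augment_to_card[of "{f}" "insert e Y"] by (auto simp: bases_iff_card_rank)
    then have B: "B \<in> bases indep" "f \<in> B" "B \<subseteq> insert f (insert e Y)"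
      using eY sub by (auto simp: bases_iff_card_rank)
    have "e \<in> B"
    proof (rule ccontr)
      assume "e \<notin> B"
      then have "B \<subseteq> insert f Y" using B(3) by blast
      moreover have "card (insert f Y) \<le> card B"
        using B(1) iY rank_pos card_insert_le_m1[of "card B" Y f]
        by (simp add: bases_iff_card_rank)
      ultimately have "B = insert f Y"
        using iY(2) by (intro card_seteq) auto
      then show False using B(1) fY by simp
    qed
    then have "e = f"
      using unique_expansionD[OF unique B(1) X _ B(2) eX fX] by blast
    then show False using e nf by simp
  qed
qed

lemma disjoint_forming_bases_iff: "disjoint (forming_bases E indep) \<longleftrightarrow> unique_expansion E indep"
proof
  assume disj: "disjoint (forming_bases E indep)"
  show "unique_expansion E indep"
    unfolding unique_expansion_def
  proof (intro ballI allI impI)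
    fix B A e1 e2
    assume B: "B \<in> bases indep" and A: "A \<in> secondary_bases E indep"
      and h: "e1 \<in> B \<and> e2 \<in> B \<and> A \<union> {e1} \<in> bases indep \<and> A \<union> {e2} \<in> bases indep"
    show "e1 = e2"
    proof (rule ccontr)
      assume "e1 \<noteq> e2"
      let ?Y = "B - {e1}"
      have Y: "?Y \<in> secondary_bases E indep"
        using base_delete_secondary B h by blast
      have "e1 \<in> Kset E indep A" "e2 \<in> Kset E indep A"
        using h Kset_secondary[OF A] by auto
      moreover have "e1 \<in> Kset E indep ?Y"
        using mem_Kset_base_delete B h by blast
      moreover have "?Y \<notin> bases indep"
        using Y rank_pos by (auto simp: secondary_bases_def bases_iff_card_rank)
      then have "e2 \<notin> Kset E indep ?Y"
        using Kset_secondary[OF Y] h \<open>e1 \<noteq> e2\<close> by (simp add: insert_absorb)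
      moreover have "Kset E indep A \<in> forming_bases E indep" "Kset E indep ?Y \<in> forming_bases E indep"
        using A Y unfolding forming_bases_def by auto
      ultimately show False
        using disjointD[OF disj] by blast
    qed
  qed
next
  assume unique: "unique_expansion E indep"
  show "disjoint (forming_bases E indep)"
  proof (rule disjointI)
    fix p q assume "p \<in> forming_bases E indep" "q \<in> forming_bases E indep" "p \<noteq> q"
    then show "p \<inter> q = {}"
      unfolding forming_bases_def
      using Kset_subset_if_common_element[OF unique] by (auto intro: subset_antisym)
  qed
qed

end

end

theorem theorem4:
  fixes E :: "'a set" and indep :: "'a set \<Rightarrow> bool"
  assumes "finite E"
    and "matroid E indep"
    and "matroid_rank E indep > 0"
  shows "partition_on (\<Union>(bases indep)) (forming_bases E indep) \<longleftrightarrow> unique_expansion E indep"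
proof -
  interpret finite_matroid E indep
    using assms(1,2) by unfold_locales
  show ?thesis
    unfolding partition_on_def
    using Union_forming_bases empty_notin_forming_bases disjoint_forming_bases_iff assms(3)
    by blast
qed

end
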